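(* Let $E$ be a finite set and $\mathcal{W} \subseteq \{+,-,0\}^E$. Then $\mathcal{W}$ is an affine oriented matroid if and only if $\mathcal{W}$ satisfies the following three axioms: (A1) if $X,Y \in \mathcal{W}$ then $X \circ Y \in \mathcal{W}$ and $X \circ (-Y) \in \mathcal{W}$; (A2) if $X,Y \in \mathcal{W}$ with $\underline{X}=\underline{Y}$, then $I_e(X,Y) \cap \mathcal{W} \neq \emptyset$ for every $e \in S(X,Y)$; (A3) $\mathcal{P}(\mathcal{W}) \circ \mathcal{W} \subseteq \mathcal{W}$.
   Context: A sign vector on a finite set $E$ is an element $X \in \{+,-,0\}^E$; write $X^{+}=\{e: X_e=+\}$, $X^-=\{e:X_e=-\}$, support $\underline{X}=X^+\cup X^-$. The opposite $-X$ has $(-X)_e=-X_e$. Composition: $(X\circ Y)_e = X_e$ if $X_e\neq 0$ and $Y_e$ otherwise. Separation set: $S(X,Y)=(X^+\cap Y^-)\cup(X^-\cap Y^+)$. For sets $\mathcal{A},\mathcal{B}$ of sign vectors, $\mathcal{A}\circ\mathcal{B}=\{A\circ B: A\in\mathcal{A},B\in\mathcal{B}\}$. A set $\mathcal{O}\subseteq\{+,-,0\}^{F}$ is (the covector set of) an oriented matroid on $F$ if: (O1) the zero vector lies in $\mathcal{O}$; (O2) $X\in\mathcal{O}\Rightarrow -X\in\mathcal{O}$; (O3) $X,Y\in\mathcal{O}\Rightarrow X\circ Y\in\mathcal{O}$; (O4) if $X,Y\in\mathcal{O}$ with $\underline{X}=\underline{Y}$ and $e\in S(X,Y)$, there is $Z\in\mathcal{O}$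 with $Z_e=0$ and $Z_f=(X\circ Y)_f=(Y\circ X)_f$ for all $f\notin S(X,Y)$. $\mathcal{W}\subseteq\{+,-,0\}^E$ is an affine oriented matroid if there exist an element $g\notin E$ and an oriented matroid $\mathcal{O}$ on $E\cup\{g\}$ such that $\mathcal{W}=\{X|_E : X\in\mathcal{O},\ X_g=+\}$. For $X,Y$ with $\underline{X}=\underline{Y}$ and $X\neq Y$, and $e\in S(X,Y)$: $I_e(X,Y)=\{V\in\{+,-,0\}^E : \underline{V}\subseteq \underline{X}\setminus\{e\},\ V_f=X_f \text{ for all } f\notin S(X,Y)\}$, and $I(X,Y)=\bigcup_{e\in S(X,Y)} I_e(X,Y)$. Sum: $(X+Y)_e=0$ if $e\in S(X,Y)$, and $(X+Y)_e=(X\circ Y)_e$ otherwise. For $\mathcal{W}\subseteq\{+,-,0\}^E$: $\mathrm{sym}(\mathcal{W})=\{V: V\in\mathcal{W}, -V\in\mathcal{W}\}$, $\mathrm{asym}(\mathcal{W})=\{V\in\mathcal{W}: -V\notin\mathcal{W}\}$, and $\mathcal{P}(\mathcal{W})=\{X+(-Y): X,Y\in\mathrm{asym}(\mathcal{W}),\ \underline{X}=\underline{Y},\ I(X,-Y)\cap\mathcal{W}=I(-X,Y)\cap\mathcal{W}=\emptyset\}$. *)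

theory Defs
  imports Main
begin

datatype sign = Pos | Neg | Zer

type_synonym 'a sv = "'a \<Rightarrow> sign"

definition signvecs :: "'a set \<Rightarrow> 'a sv set" where
  "signvecs E = {X. \<forall>e. e \<notin> E \<longrightarrow> X e = Zer}"

definition pos_part :: "'a sv \<Rightarrow> 'a set" where "pos_part X = {e. X e = Pos}"
definition neg_part :: "'a sv \<Rightarrow> 'a set" where "neg_part X = {e. X e = Neg}"
definition supp :: "'a sv \<Rightarrow> 'a set" where "supp X = pos_part X \<union> neg_part X"

fun neg_sign :: "sign \<Rightarrow> sign" where
  "neg_sign Pos = Neg" | "neg_sign Neg = Pos" | "neg_sign Zer = Zer"

definition opp :: "'a sv \<Rightarrow> 'a sv" where "opp X = (\<lambda>e. neg_sign (X e))"

definition comp :: "'a sv \<Rightarrow> 'a sv \<Rightarrow> 'a sv" where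
  "comp X Y = (\<lambda>e. if X e \<noteq> Zer then X e else Y e)"

definition sep :: "'a sv \<Rightarrow> 'a sv \<Rightarrow> 'a set" where
  "sep X Y = (pos_part X \<inter> neg_part Y) \<union> (neg_part X \<inter> pos_part Y)"

definition comp_set :: "'a sv set \<Rightarrow> 'a sv set \<Rightarrow> 'a sv set" where
  "comp_set A B = {comp X Y | X Y. X \<in> A \<and> Y \<in> B}"

definition oriented_matroid :: "'a set \<Rightarrow> 'a sv set \<Rightarrow> bool" where
  "oriented_matroid F OM \<longleftrightarrow>
     OM \<subseteq> signvecs F \<and>
     (\<lambda>_. Zer) \<in> OM \<and>
     (\<forall>X\<in>OM. opp X \<in> OM) \<and>
     (\<forall>X\<in>OM. \<forall>Y\<in>OM. comp X Y \<in> OM) \<and>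
     (\<forall>X\<in>OM. \<forall>Y\<in>OM. supp X = supp Y \<longrightarrow> (\<forall>e\<in>sep X Y.
        (\<exists>Z\<in>OM. Z e = Zer \<and> (\<forall>f. f \<notin> sep X Y \<longrightarrow>
            Z f = comp X Y f \<and> Z f = comp Y X f))))"

text \<open>The extra element g is realised as None in the ground set Some ` E \<union> {None}.\<close>
definition affine_oriented_matroid :: "'a set \<Rightarrow> 'a sv set \<Rightarrow> bool" where
  "affine_oriented_matroid E W \<longleftrightarrow>
     (\<exists>OM :: ('a option) sv set. oriented_matroid (insert None (Some ` E)) OM \<and>
        W = {(\<lambda>e. X (Some e)) | X. X \<in> OM \<and> X None = Pos})"

definition I_e :: "'a set \<Rightarrow> 'a \<Rightarrow> 'a sv \<Rightarrow> 'a sv \<Rightarrow> 'a sv set" where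
  "I_e E e X Y = {V \<in> signvecs E. supp V \<subseteq> supp X - {e} \<and>
                    (\<forall>f\<in>E. f \<notin> sep X Y \<longrightarrow> V f = X f)}"

definition I_all :: "'a set \<Rightarrow> 'a sv \<Rightarrow> 'a sv \<Rightarrow> 'a sv set" where
  "I_all E X Y = (\<Union>e\<in>sep X Y. I_e E e X Y)"

definition sv_sum :: "'a sv \<Rightarrow> 'a sv \<Rightarrow> 'a sv" where
  "sv_sum X Y = (\<lambda>e. if e \<in> sep X Y then Zer else comp X Y e)"

definition sym_part :: "'a sv set \<Rightarrow> 'a sv set" where
  "sym_part W = {V. V \<in> W \<and> opp V \<in> W}"

definition asym_part :: "'a sv set \<Rightarrow> 'a sv set" where
  "asym_part W = {V \<in> W. opp V \<notin> W}"

definition P_set :: "'a set \<Rightarrow> 'a sv set \<Rightarrow> 'a sv set" where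
  "P_set E W = {sv_sum X (opp Y) | X Y. X \<in> asym_part W \<and> Y \<in> asym_part W \<and>
      supp X = supp Y \<and> I_all E X (opp Y) \<inter> W = {} \<and> I_all E (opp X) Y \<inter> W = {}}"

definition A1 :: "'a sv set \<Rightarrow> bool" where
  "A1 W \<longleftrightarrow> (\<forall>X\<in>W. \<forall>Y\<in>W. comp X Y \<in> W \<and> comp X (opp Y) \<in> W)"

definition A2 :: "'a set \<Rightarrow> 'a sv set \<Rightarrow> bool" where
  "A2 E W \<longleftrightarrow> (\<forall>X\<in>W. \<forall>Y\<in>W. supp X = supp Y \<longrightarrow>
      (\<forall>e\<in>sep X Y. I_e E e X Y \<inter> W \<noteq> {}))"

definition A3 :: "'a set \<Rightarrow> 'a sv set \<Rightarrow> bool" where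
  "A3 E W \<longleftrightarrow> comp_set (P_set E W) W \<subseteq> W"

end

theory Submission
  imports Defs
begin

text \<open>
  Necessity: \<open>W\<close> is the part with \<open>X\<^sub>g = +\<close> of an oriented matroid \<open>OM\<close> on \<open>E \<union> {g}\<close>, so
  (A1) and (A2) are composition and elimination in \<open>OM\<close>. For (A3), eliminate \<open>g\<close> between \<open>(X,+)\<close>
  and \<open>(-Y,-)\<close>: a sign other than \<open>0\<close> of the eliminant at some \<open>e \<in> S(X,-Y)\<close> would, after one
  more elimination, put a vector of \<open>W\<close> into \<open>I(X,-Y)\<close> or \<open>I(-X,Y)\<close>. Hence the eliminant is
  \<open>(X + (-Y), 0)\<close>, and composing it with \<open>(Z,+)\<close> stays in \<open>OM\<close>.

  Sufficiency: call \<open>V\<close> a direction if \<open>V \<circ> W \<subseteq> W\<close> and \<open>(-V) \<circ> W \<subseteq> W\<close>, and take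
  \<open>OM = {(X,+) | X \<in> W} \<union> {(-X,-) | X \<in> W} \<union> {(V,0) | V direction}\<close>. Only elimination is not
  immediate. Between \<open>(X,+)\<close> and \<open>(-Y,-)\<close> it needs a direction agreeing with \<open>X\<close> off \<open>S(X,-Y)\<close>,
  found by induction on \<open>|S(X,-Y)|\<close>: an element of \<open>I(X,-Y) \<inter> W\<close> or \<open>I(-X,Y) \<inter> W\<close> given by (A2)
  shrinks \<open>S(X,-Y)\<close>, and if there is none then \<open>X + (-Y) \<in> P_set E W\<close> is a direction by (A3).
  Elimination between two directions \<open>V, U\<close> is reduced to this by composing them with a vector
  of \<open>W\<close> that sticks out of \<open>supp V\<close> as little as possible; finiteness of \<open>E\<close> enters here and
  in the induction.
\<close>

section \<open>Sign vectors\<close>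

lemma supp_iff [simp]: "f \<in> supp X \<longleftrightarrow> X f \<noteq> Zer"
  by (cases "X f") (auto simp: supp_def pos_part_def neg_part_def)

lemma sep_iff [simp]:
  "f \<in> sep X Y \<longleftrightarrow> (X f = Pos \<and> Y f = Neg) \<or> (X f = Neg \<and> Y f = Pos)"
  by (auto simp: sep_def pos_part_def neg_part_def)

lemma comp_apply [simp]: "comp X Y f = (if X f = Zer then Y f else X f)"
  by (simp add: comp_def)

lemma opp_apply [simp]: "opp X f = neg_sign (X f)"
  by (simp add: opp_def)

lemma sv_sum_apply: "sv_sum X Y f = (if f \<in> sep X Y then Zer else comp X Y f)"
  by (simp add: sv_sum_def)

lemma neg_sign_eq_iff [simp]:
  "neg_sign s = Zer \<longleftrightarrow> s = Zer" "neg_sign s = Pos \<longleftrightarrow> s = Neg" "neg_sign s = Neg \<longleftrightarrow> s = Pos"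
  by (cases s; simp)+

lemma neg_sign_neg_sign [simp]: "neg_sign (neg_sign s) = s"
  by (cases s) auto

lemma opp_opp [simp]: "opp (opp X) = X"
  by (simp add: opp_def)

lemma supp_opp [simp]: "supp (opp X) = supp X"
  by auto

lemma opp_comp: "opp (comp X Y) = comp (opp X) (opp Y)"
  by (rule ext) simp

lemma comp_assoc: "comp (comp X Y) Z = comp X (comp Y Z)"
  by (rule ext) simp

lemma sep_sym: "sep X Y = sep Y X"
  by auto

lemma sep_opp_swap: "sep (opp X) Y = sep X (opp Y)"
  by auto

lemma sep_opp_comm: "sep X (opp Y) = sep Y (opp X)"
  by auto

lemma supp_eqD: "supp X = supp Y \<Longrightarrow> X f = Zer \<longleftrightarrow> Y f = Zer"
  by (metis supp_iff)

lemma signvecs_iff: "X \<in> signvecs E \<longleftrightarrow> (\<forall>e. e \<notin> E \<longrightarrow> X e = Zer)"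
  by (simp add: signvecs_def)

lemma opp_signvecs: "X \<in> signvecs E \<Longrightarrow> opp X \<in> signvecs E"
  by (simp add: signvecs_iff)

lemma eq_if_not_sep: "supp X = supp Y \<Longrightarrow> f \<notin> sep X Y \<Longrightarrow> Y f = X f"
  by (drule supp_eqD[of _ _ f]) (cases "X f"; cases "Y f"; simp)

lemma opp_eq_if_not_sep: "supp X = supp Y \<Longrightarrow> f \<notin> sep X (opp Y) \<Longrightarrow> opp Y f = X f"
  using eq_if_not_sep[of X "opp Y" f] by simp

lemma supp_comp: "supp (comp X Y) = supp X \<union> supp Y"
  by auto

lemma supp_comp_eq: "supp Y \<subseteq> supp X \<Longrightarrow> supp (comp Y X) = supp X"
  by (auto simp: subset_iff split: if_splits)

lemma I_e_sym:
  assumes "supp X = supp Y"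
  shows "I_e E e X Y = I_e E e Y X"
proof -
  have "(\<forall>f\<in>E. f \<notin> sep X Y \<longrightarrow> V f = X f) \<longleftrightarrow> (\<forall>f\<in>E. f \<notin> sep Y X \<longrightarrow> V f = Y f)" for V
    using eq_if_not_sep[OF assms] by (metis sep_sym)
  then show ?thesis
    unfolding I_e_def assms by blast
qed

lemma I_all_sym: "supp X = supp Y \<Longrightarrow> I_all E X Y = I_all E Y X"
  unfolding I_all_def by (simp add: I_e_sym sep_sym[of Y X])

lemma I_e_eq_if_not_sep:
  assumes "V \<in> I_e E e X Y" "X \<in> signvecs E" "f \<notin> sep X Y"
  shows "V f = X f"
  using assms by (cases "f \<in> E") (auto simp: I_e_def signvecs_iff)

definition restr :: "'a option sv \<Rightarrow> 'a sv" where
  "restr Y = (\<lambda>e. Y (Some e))"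

definition lift :: "'a sv \<Rightarrow> sign \<Rightarrow> 'a option sv" where
  "lift X s = (\<lambda>x. case x of None \<Rightarrow> s | Some e \<Rightarrow> X e)"

lemma lift_None [simp]: "lift X s None = s"
  and lift_Some [simp]: "lift X s (Some e) = X e"
  and restr_apply [simp]: "restr Y e = Y (Some e)"
  by (simp_all add: lift_def restr_def)

lemma restr_lift [simp]: "restr (lift X s) = X"
  by (rule ext) simp

lemma lift_restr: "lift (restr Y) (Y None) = Y"
  by (rule ext) (simp add: lift_def split: option.split)

lemma restr_opp [simp]: "restr (opp Y) = opp (restr Y)"
  by (rule ext) simp

lemma comp_lift: "comp (lift X s) (lift Y t) = lift (comp X Y) (if s = Zer then t else s)"
  by (rule ext) (simp add: lift_def split: option.split)

lemma opp_lift: "opp (lift X s) = lift (opp X) (neg_sign s)"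
  by (rule ext) (simp add: lift_def split: option.split)

lemma supp_lift_eq:
  assumes "supp X = supp Y" "s = Zer \<longleftrightarrow> t = Zer"
  shows "supp (lift X s) = supp (lift Y t)"
  using assms(2) supp_eqD[OF assms(1)] by (intro set_eqI, case_tac x) simp_all

lemma lift_eq_off_sep:
  assumes "\<And>j. j \<notin> sep X Y \<Longrightarrow> T j = X j" and "None \<notin> sep (lift X s) (lift Y t) \<Longrightarrow> r = s"
    and "f \<notin> sep (lift X s) (lift Y t)"
  shows "lift T r f = lift X s f"
  using assms by (cases f) auto

lemma restr_signvecs_iff: "restr Y \<in> signvecs E \<longleftrightarrow> Y \<in> signvecs (insert None (Some ` E))"
  by (auto simp: signvecs_iff)

section \<open>Necessity of the axioms\<close>

locale affine_presentation =
  fixes E :: "'a set" and W :: "'a sv set" and OM :: "'a option sv set"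
  assumes oriented_matroid: "oriented_matroid (insert None (Some ` E)) OM"
    and W_eq: "W = {(\<lambda>e. X (Some e)) | X. X \<in> OM \<and> X None = Pos}"
begin

lemma OM_signvecs: "Y \<in> OM \<Longrightarrow> restr Y \<in> signvecs E"
  using oriented_matroid by (auto simp: oriented_matroid_def restr_signvecs_iff)

lemma OM_opp: "Y \<in> OM \<Longrightarrow> opp Y \<in> OM"
  using oriented_matroid by (simp add: oriented_matroid_def)

lemma OM_comp: "Y \<in> OM \<Longrightarrow> Z \<in> OM \<Longrightarrow> comp Y Z \<in> OM"
  using oriented_matroid by (simp add: oriented_matroid_def)

lemma OM_elim:
  assumes "Y \<in> OM" "Z \<in> OM" "supp Y = supp Z" "e \<in> sep Y Z"
  obtains Q where "Q \<in> OM" "Q e = Zer" "\<And>f. f \<notin> sep Y Z \<Longrightarrow> Q f = Y f"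
proof -
  have "\<forall>X\<in>OM. \<forall>Y\<in>OM. supp X = supp Y \<longrightarrow> (\<forall>e\<in>sep X Y.
      \<exists>Q\<in>OM. Q e = Zer \<and> (\<forall>f. f \<notin> sep X Y \<longrightarrow> Q f = comp X Y f \<and> Q f = comp Y X f))"
    using oriented_matroid unfolding oriented_matroid_def by (elim conjE)
  from this[rule_format, OF assms] obtain Q where
    Q: "Q \<in> OM" "Q e = Zer" "\<And>f. f \<notin> sep Y Z \<Longrightarrow> Q f = comp Y Z f"
    by blast
  show thesis
  proof (rule that[OF Q(1,2)])
    fix f
    assume f: "f \<notin> sep Y Z"
    then have "Z f = Y f"
      by (rule eq_if_not_sep[OF assms(3)])
    then show "Q f = Y f"
      using Q(3)[OF f] by simp
  qed
qed

lemma mem_W_iff: "X \<in> W \<longleftrightarrow> lift X Pos \<in> OM"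
proof
  assume "X \<in> W"
  then obtain Y where "X = restr Y" "Y \<in> OM" "Y None = Pos"
    unfolding W_eq restr_def by blast
  then show "lift X Pos \<in> OM"
    by (metis lift_restr)
next
  assume "lift X Pos \<in> OM"
  then show "X \<in> W"
    unfolding W_eq by (intro CollectI exI[of _ "lift X Pos"]) simp
qed

lemma restr_mem_W: "Y \<in> OM \<Longrightarrow> Y None = Pos \<Longrightarrow> restr Y \<in> W"
  by (metis lift_restr mem_W_iff)

lemma axiom_A1: "A1 W"
  unfolding A1_def
proof (intro ballI conjI)
  fix X Y
  assume "X \<in> W" "Y \<in> W"
  then have "lift X Pos \<in> OM" "lift Y Pos \<in> OM"
    by (simp_all add: mem_W_iff)
  then have "comp (lift X Pos) (lift Y Pos) \<in> OM" "comp (lift X Pos) (opp (lift Y Pos)) \<in> OM"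
    by (simp_all add: OM_comp OM_opp)
  then show "comp X Y \<in> W" "comp X (opp Y) \<in> W"
    by (simp_all add: mem_W_iff comp_lift opp_lift)
qed

lemma I_e_witness:
  assumes "Q \<in> OM" "Q None = Pos" "Q (Some j) = Zer"
    and "\<And>i. Q (Some i) \<noteq> Zer \<Longrightarrow> X i \<noteq> Zer"
    and "\<And>i. i \<notin> sep X Y \<Longrightarrow> Q (Some i) = X i"
  shows "I_e E j X Y \<inter> W \<noteq> {}"
proof -
  have "supp (restr Q) \<subseteq> supp X - {j}"
    using assms(3) by (auto dest: assms(4))
  moreover have "\<forall>f\<in>E. f \<notin> sep X Y \<longrightarrow> restr Q f = X f"
    using assms(5) by (simp only: restr_apply) blast
  ultimately have "restr Q \<in> I_e E j X Y"
    using OM_signvecs[OF assms(1)] unfolding I_e_def by blast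
  moreover have "restr Q \<in> W"
    using assms(1,2) by (rule restr_mem_W)
  ultimately show ?thesis
    by blast
qed

lemma axiom_A2: "A2 E W"
  unfolding A2_def
proof (intro ballI impI)
  fix X Y e
  assume "X \<in> W" "Y \<in> W" and supp_XY: "supp X = supp Y" and e: "e \<in> sep X Y"
  then have "lift X Pos \<in> OM" "lift Y Pos \<in> OM"
    by (simp_all add: mem_W_iff)
  moreover have "supp (lift X Pos) = supp (lift Y Pos)"
    using supp_XY by (simp add: supp_lift_eq)
  moreover have "Some e \<in> sep (lift X Pos) (lift Y Pos)"
    using e by simp
  ultimately obtain Q where Q: "Q \<in> OM" "Q (Some e) = Zer"
    "\<And>f. f \<notin> sep (lift X Pos) (lift Y Pos) \<Longrightarrow> Q f = lift X Pos f"
    by (rule OM_elim) blast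
  show "I_e E e X Y \<inter> W \<noteq> {}"
  proof (rule I_e_witness[OF Q(1) _ Q(2)])
    show "Q None = Pos"
      using Q(3)[of None] by simp
    show Q_off: "Q (Some i) = X i" if "i \<notin> sep X Y" for i
      using Q(3)[of "Some i"] that by simp
    show "X i \<noteq> Zer" if "Q (Some i) \<noteq> Zer" for i
      using that Q_off[of i] by (cases "i \<in> sep X Y") auto
  qed
qed

text \<open>Eliminate \<open>Some j\<close> between the lifts of \<open>X\<close> and \<open>R \<circ> X\<close>.\<close>
lemma elimination_conflict:
  assumes X: "X \<in> W" and R: "R \<in> OM" "R None = Zer"
    and R_off: "\<And>i. i \<notin> sep X Y \<Longrightarrow> R (Some i) = X i"
    and j: "j \<in> sep X Y" "R (Some j) = neg_sign (X j)"
  shows "I_e E j X Y \<inter> W \<noteq> {}"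
proof -
  define C where "C = comp R (lift X Pos)"
  have R_supp: "X i \<noteq> Zer" if "R (Some i) \<noteq> Zer" for i
    using that R_off[of i] by (cases "i \<in> sep X Y") auto
  have "lift X Pos \<in> OM" "C \<in> OM"
    using X R by (simp_all add: C_def mem_W_iff OM_comp)
  moreover have "supp (lift X Pos) = supp C"
    by (rule set_eqI, case_tac x) (auto simp: C_def R(2) dest: R_supp)
  moreover have "Some j \<in> sep (lift X Pos) C"
    using j by (cases "X j") (auto simp: C_def)
  ultimately obtain Q where Q: "Q \<in> OM" "Q (Some j) = Zer"
    "\<And>f. f \<notin> sep (lift X Pos) C \<Longrightarrow> Q f = lift X Pos f"
    by (rule OM_elim) blast
  have C_off: "C (Some i) = X i" if "i \<notin> sep X Y" for i
    using R_off[OF that] by (simp add: C_def)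
  show ?thesis
  proof (rule I_e_witness[OF Q(1) _ Q(2)])
    show "Q None = Pos"
      using Q(3)[of None] R(2) by (simp add: C_def)
    show "Q (Some i) = X i" if "i \<notin> sep X Y" for i
      using Q(3)[of "Some i"] C_off[OF that] by auto
    show "X i \<noteq> Zer" if "Q (Some i) \<noteq> Zer" for i
      using that Q(3)[of "Some i"] by (cases "Some i \<in> sep (lift X Pos) C") auto
  qed
qed

lemma eliminant_vanishes_on_sep:
  assumes XY: "X \<in> W" "Y \<in> W" and supp_XY: "supp X = supp Y"
    and I1: "I_all E X (opp Y) \<inter> W = {}" and I2: "I_all E (opp X) Y \<inter> W = {}"
    and R: "R \<in> OM" "R None = Zer" and R_off: "\<And>i. i \<notin> sep X (opp Y) \<Longrightarrow> R (Some i) = X i"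
    and j: "j \<in> sep X (opp Y)"
  shows "R (Some j) = Zer"
proof (rule ccontr)
  assume "R (Some j) \<noteq> Zer"
  then consider "R (Some j) = neg_sign (X j)" | "opp R (Some j) = neg_sign (Y j)"
    using j by (cases "R (Some j)"; cases "X j"; cases "Y j") auto
  then show False
  proof cases
    case 1
    then have "I_e E j X (opp Y) \<inter> W \<noteq> {}"
      using elimination_conflict[OF XY(1) R R_off j] by blast
    with j I1 show False
      unfolding I_all_def by blast
  next
    case 2
    have "opp R (Some i) = Y i" if "i \<notin> sep Y (opp X)" for i
    proof -
      have i: "i \<notin> sep X (opp Y)"
        using that by auto
      then have "X i = neg_sign (Y i)"
        using opp_eq_if_not_sep[OF supp_XY i] by simp
      then show ?thesis
        using R_off[OF i] by simp
    qed
    moreover have "j \<in> sep Y (opp X)"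
      using j by auto
    ultimately have "I_e E j Y (opp X) \<inter> W \<noteq> {}"
      using elimination_conflict[where Y = "opp X", OF XY(2) OM_opp[OF R(1)] _ _ _ 2] R(2)
      by simp
    moreover have "I_e E j Y (opp X) \<subseteq> I_all E (opp X) Y"
      using j supp_XY by (auto simp: I_all_def I_e_sym[of Y "opp X"])
    ultimately show False
      using I2 by blast
  qed
qed

lemma lift_sv_sum_mem:
  assumes XY: "X \<in> W" "Y \<in> W" and supp_XY: "supp X = supp Y"
    and I1: "I_all E X (opp Y) \<inter> W = {}" and I2: "I_all E (opp X) Y \<inter> W = {}"
  shows "lift (sv_sum X (opp Y)) Zer \<in> OM"
proof -
  have "lift X Pos \<in> OM" "lift (opp Y) Neg \<in> OM"
    using XY OM_opp[of "lift Y Pos"] by (simp_all add: mem_W_iff opp_lift)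
  moreover have "supp (lift X Pos) = supp (lift (opp Y) Neg)"
    using supp_XY by (simp add: supp_lift_eq)
  moreover have "None \<in> sep (lift X Pos) (lift (opp Y) Neg)"
    by simp
  ultimately obtain R where R: "R \<in> OM" "R None = Zer"
    "\<And>f. f \<notin> sep (lift X Pos) (lift (opp Y) Neg) \<Longrightarrow> R f = lift X Pos f"
    by (rule OM_elim) blast
  have R_off: "R (Some i) = X i" if "i \<notin> sep X (opp Y)" for i
    using R(3)[of "Some i"] that by simp
  have "R (Some j) = Zer" if "j \<in> sep X (opp Y)" for j
    by (rule eliminant_vanishes_on_sep[OF XY supp_XY I1 I2 R(1,2) R_off that])
  then have "R = lift (sv_sum X (opp Y)) Zer"
    by (intro ext, case_tac x) (auto simp: R(2) R_off sv_sum_apply supp_eqD[OF supp_XY])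
  with R(1) show ?thesis
    by simp
qed

lemma axiom_A3: "A3 E W"
  unfolding A3_def
proof
  fix V
  assume "V \<in> comp_set (P_set E W) W"
  then obtain X Y Z where V: "V = comp (sv_sum X (opp Y)) Z" and "Z \<in> W"
    and XY: "X \<in> W" "Y \<in> W" "supp X = supp Y"
      "I_all E X (opp Y) \<inter> W = {}" "I_all E (opp X) Y \<inter> W = {}"
    unfolding comp_set_def P_set_def asym_part_def by blast
  then have "comp (lift (sv_sum X (opp Y)) Zer) (lift Z Pos) \<in> OM"
    using lift_sv_sum_mem OM_comp mem_W_iff by blast
  then show "V \<in> W"
    by (simp add: V mem_W_iff comp_lift)
qed

end

lemma affine_oriented_matroid_imp_axioms:
  assumes "affine_oriented_matroid E W"
  shows "A1 W \<and> A2 E W \<and> A3 E W"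
proof -
  from assms obtain OM where "affine_presentation E W OM"
    unfolding affine_oriented_matroid_def affine_presentation_def by blast
  then show ?thesis
    using affine_presentation.axiom_A1 affine_presentation.axiom_A2
      affine_presentation.axiom_A3 by blast
qed

section \<open>Sufficiency of the axioms\<close>

locale affine_axioms =
  fixes E :: "'a set" and W :: "'a sv set"
  assumes finite_E: "finite E" and W_signvecs: "W \<subseteq> signvecs E"
    and A1: "A1 W" and A2: "A2 E W" and A3: "A3 E W"
begin

lemma W_zero: "X \<in> W \<Longrightarrow> e \<notin> E \<Longrightarrow> X e = Zer"
  using W_signvecs by (auto simp: signvecs_iff)

lemma finite_supp: "X \<in> W \<Longrightarrow> finite (supp X)"
  by (rule finite_subset[OF _ finite_E]) (use W_zero in fastforce)

lemma finite_sep: "X \<in> W \<Longrightarrow> finite (sep X Y)"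
  by (rule finite_subset[OF _ finite_supp]) auto

lemma W_comp: "X \<in> W \<Longrightarrow> Y \<in> W \<Longrightarrow> comp X Y \<in> W"
  and W_comp_opp: "X \<in> W \<Longrightarrow> Y \<in> W \<Longrightarrow> comp X (opp Y) \<in> W"
  using A1 by (auto simp: A1_def)

lemma W_elim:
  assumes X: "X \<in> W" and "Y \<in> W" "supp X = supp Y" "e \<in> sep X Y"
  obtains Z where "Z \<in> W" "Z e = Zer" "supp Z \<subseteq> supp X" "\<And>f. f \<notin> sep X Y \<Longrightarrow> Z f = X f"
proof -
  from A2 assms obtain Z where Z: "Z \<in> I_e E e X Y" "Z \<in> W"
    unfolding A2_def by blast
  show thesis
  proof (rule that[OF Z(2)])
    show "Z e = Zer" "supp Z \<subseteq> supp X"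
      using Z(1) by (auto simp: I_e_def)
    show "Z f = X f" if "f \<notin> sep X Y" for f
      using I_e_eq_if_not_sep[OF Z(1) _ that] X W_signvecs by blast
  qed
qed

text \<open>The vectors that will carry the sign \<open>0\<close> at the extra element \<open>g\<close>.\<close>
definition directions :: "'a sv set" where
  "directions = {V \<in> signvecs E. \<forall>X\<in>W. comp V X \<in> W \<and> comp (opp V) X \<in> W}"

lemma directions_signvecs: "V \<in> directions \<Longrightarrow> V \<in> signvecs E"
  by (simp add: directions_def)

lemma directions_opp: "V \<in> directions \<Longrightarrow> opp V \<in> directions"
  by (auto simp: directions_def opp_signvecs)

lemma directions_comp_W: "V \<in> directions \<Longrightarrow> X \<in> W \<Longrightarrow> comp V X \<in> W"
  by (simp add: directions_def)

lemma directions_comp: "V \<in> directions \<Longrightarrow> U \<in> directions \<Longrightarrow> comp V U \<in> directions"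
  by (auto simp: directions_def signvecs_iff comp_assoc opp_comp)

lemma zero_directions: "(\<lambda>_. Zer) \<in> directions"
proof -
  have "comp (\<lambda>_. Zer) X = X" "comp (opp (\<lambda>_. Zer)) X = X" for X :: "'a sv"
    by (auto intro!: ext)
  then show ?thesis
    by (simp add: directions_def signvecs_iff)
qed

lemma W_comp_directions: "X \<in> W \<Longrightarrow> V \<in> directions \<Longrightarrow> comp X V \<in> W"
proof -
  assume "X \<in> W" "V \<in> directions"
  moreover have "comp X V = comp X (comp V X)"
    by (rule ext) simp
  ultimately show ?thesis
    by (simp add: W_comp directions_comp_W)
qed

lemma sym_directions: "X \<in> W \<Longrightarrow> opp X \<in> W \<Longrightarrow> X \<in> directions"
  using W_signvecs W_comp by (auto simp: directions_def)

lemma P_set_opp: "p \<in> P_set E W \<Longrightarrow> opp p \<in> P_set E W"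
proof -
  assume "p \<in> P_set E W"
  then obtain X Y where p: "p = sv_sum X (opp Y)" and XY: "X \<in> asym_part W" "Y \<in> asym_part W"
    "supp X = supp Y" "I_all E X (opp Y) \<inter> W = {}" "I_all E (opp X) Y \<inter> W = {}"
    unfolding P_set_def by blast
  have "opp p = sv_sum Y (opp X)"
    by (rule ext, case_tac "X x"; case_tac "Y x") (auto simp: p sv_sum_apply)
  moreover have "I_all E Y (opp X) = I_all E (opp X) Y" "I_all E (opp Y) X = I_all E X (opp Y)"
    using XY(3) by (simp_all add: I_all_sym)
  ultimately show "opp p \<in> P_set E W"
    using XY unfolding P_set_def by (intro CollectI exI[of _ Y] exI[of _ X]) simp
qed

lemma P_set_directions: "p \<in> P_set E W \<Longrightarrow> p \<in> directions"
proof -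
  have comp_W: "comp q X \<in> W" if "q \<in> P_set E W" "X \<in> W" for q X
    using A3 that unfolding A3_def comp_set_def by blast
  assume p: "p \<in> P_set E W"
  then obtain X Y where "p = sv_sum X (opp Y)" "X \<in> W" "Y \<in> W"
    unfolding P_set_def asym_part_def by blast
  then have "p \<in> signvecs E"
    using W_zero by (auto simp: signvecs_iff sv_sum_apply)
  then show ?thesis
    using comp_W p P_set_opp by (simp add: directions_def)
qed

lemma sep_reduction:
  assumes A: "A \<in> W" and Y: "Y \<in> W" "Y \<in> I_e E k A (opp B)" and k: "k \<in> sep A (opp B)"
  defines "A' \<equiv> comp Y (opp A)"
  shows "A' \<in> W" "supp A' = supp A" "\<And>f. f \<notin> sep A (opp B) \<Longrightarrow> A' f = A f"
    and "sep A' (opp B) \<subset> sep A (opp B)"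
proof -
  have Y_off: "Y f = A f" if "f \<notin> sep A (opp B)" for f
    using I_e_eq_if_not_sep[OF Y(2) _ that] A W_signvecs by blast
  have Y_supp: "supp Y \<subseteq> supp A - {k}"
    using Y(2) by (simp add: I_e_def)
  show "A' \<in> W"
    unfolding A'_def by (rule W_comp_opp[OF Y(1) A])
  show "supp A' = supp A"
    unfolding A'_def using supp_comp_eq[of Y "opp A"] Y_supp by auto
  show off: "A' f = A f" if "f \<notin> sep A (opp B)" for f
    using Y_off[OF that] by (cases "A f") (auto simp: A'_def)
  have "sep A' (opp B) \<subseteq> sep A (opp B)"
  proof
    fix f
    assume f: "f \<in> sep A' (opp B)"
    show "f \<in> sep A (opp B)"
    proof (rule ccontr)
      assume "f \<notin> sep A (opp B)"
      moreover have "A' f = A f"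
        using calculation by (rule off)
      with f have "f \<in> sep A (opp B)"
        by (simp only: sep_iff)
      ultimately show False
        by contradiction
    qed
  qed
  moreover have "k \<notin> sep A' (opp B)"
  proof -
    have "Y k = Zer"
      using Y_supp by auto
    then show ?thesis
      using k by (cases "A k") (auto simp: A'_def)
  qed
  ultimately show "sep A' (opp B) \<subset> sep A (opp B)"
    using k by blast
qed

lemma direction_vanishing_on_symmetric:
  assumes A: "A \<in> W" and B: "B \<in> W" and supp_AB: "supp A = supp B" and N: "N \<subseteq> supp A"
    and sym: "opp A \<in> W \<or> opp B \<in> W"
    and agree: "\<And>Y f. Y \<in> W \<Longrightarrow> supp Y \<subseteq> supp A \<Longrightarrow> f \<in> N \<Longrightarrow> Y f = A f"
  shows "\<exists>Z\<in>directions. (\<forall>f. f \<notin> sep A (opp B) \<longrightarrow> Z f = A f) \<and> (\<forall>f\<in>N. Z f = Zer)"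
proof -
  have N_empty: "N = {}" if "Y \<in> W" "opp Y \<in> W" "supp Y = supp A" for Y
  proof -
    have "A f = Zer" if "f \<in> N" for f
      using agree[OF \<open>Y \<in> W\<close> _ that] agree[OF \<open>opp Y \<in> W\<close> _ that] \<open>supp Y = supp A\<close>
      by (cases "A f") auto
    then show ?thesis
      using N by auto
  qed
  from sym show ?thesis
  proof
    assume "opp A \<in> W"
    then show ?thesis
      using N_empty[OF A] sym_directions[OF A] by blast
  next
    assume "opp B \<in> W"
    moreover have "opp B f = A f" if "f \<notin> sep A (opp B)" for f
      using opp_eq_if_not_sep[OF supp_AB that] .
    ultimately show ?thesis
      using N_empty[of "opp B"] sym_directions[of "opp B"] B supp_AB
      by (intro bexI[of _ "opp B"]) auto
  qed
qed

lemma direction_vanishing_on_P_set: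
  assumes "A \<in> asym_part W" "B \<in> asym_part W" and supp_AB: "supp A = supp B"
    and "I_all E A (opp B) \<inter> W = {}" "I_all E (opp A) B \<inter> W = {}" and N: "N \<subseteq> supp A"
    and agree: "\<And>Y f. Y \<in> W \<Longrightarrow> supp Y \<subseteq> supp A \<Longrightarrow> f \<in> N \<Longrightarrow> Y f = A f"
  shows "\<exists>Z\<in>directions. (\<forall>f. f \<notin> sep A (opp B) \<longrightarrow> Z f = A f) \<and> (\<forall>f\<in>N. Z f = Zer)"
proof -
  have "sv_sum A (opp B) \<in> directions"
    using assms by (intro P_set_directions) (auto simp: P_set_def)
  moreover have "sv_sum A (opp B) f = A f" if "f \<notin> sep A (opp B)" for f
    using that supp_eqD[OF supp_AB, of f] by (cases "A f"; cases "B f") (auto simp: sv_sum_apply)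
  moreover have "sv_sum A (opp B) f = Zer" if f: "f \<in> N" for f
  proof -
    have "B f = A f" "A f \<noteq> Zer"
      using agree[of B f] assms(2) supp_AB N f by (auto simp: asym_part_def)
    then show ?thesis
      by (cases "A f") (auto simp: sv_sum_apply)
  qed
  ultimately show ?thesis
    by blast
qed

text \<open>The set \<open>N\<close> is only needed for the elimination between directions; the elimination
  between \<open>(A,+)\<close> and \<open>(-B,-)\<close> uses \<open>N = {}\<close>.\<close>
lemma direction_vanishing_on:
  assumes "A \<in> W" "B \<in> W" "supp A = supp B" "N \<subseteq> supp A"
    and "\<And>Y f. Y \<in> W \<Longrightarrow> supp Y \<subseteq> supp A \<Longrightarrow> f \<in> N \<Longrightarrow> Y f = A f"
  shows "\<exists>Z\<in>directions. (\<forall>f. f \<notin> sep A (opp B) \<longrightarrow> Z f = A f) \<and> (\<forall>f\<in>N. Z f = Zer)"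
  using assms
proof (induction "card (sep A (opp B))" arbitrary: A B rule: less_induct)
  case less
  note A = less.prems(1) and B = less.prems(2) and supp_AB = less.prems(3)
    and N = less.prems(4) and agree = less.prems(5)
  have "I_all E (opp A) B = I_all E B (opp A)"
    using supp_AB by (simp add: I_all_sym)
  then consider (sym) "opp A \<in> W \<or> opp B \<in> W"
    | (red_A) k Y where "k \<in> sep A (opp B)" "Y \<in> W" "Y \<in> I_e E k A (opp B)"
    | (red_B) k Y where "k \<in> sep B (opp A)" "Y \<in> W" "Y \<in> I_e E k B (opp A)"
    | (base) "A \<in> asym_part W" "B \<in> asym_part W"
        "I_all E A (opp B) \<inter> W = {}" "I_all E (opp A) B \<inter> W = {}"
    using A B unfolding I_all_def asym_part_def by blast
  then show ?case
  proof cases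
    case sym
    show ?thesis
      by (rule direction_vanishing_on_symmetric[OF A B supp_AB N sym]) (rule agree)
  next
    case (red_A k Y)
    define A' where "A' = comp Y (opp A)"
    note A' = sep_reduction[OF A red_A(2,3,1), folded A'_def]
    have "A' f = A f" if "f \<in> N" for f
    proof -
      have "Y f = A f"
        using agree[OF red_A(2) _ that] red_A(3) by (auto simp: I_e_def)
      with that N show ?thesis
        by (auto simp: A'_def)
    qed
    then have agree': "Y' f = A' f" if "Y' \<in> W" "supp Y' \<subseteq> supp A'" "f \<in> N" for Y' f
      using agree that A'(2) by simp
    have lt: "card (sep A' (opp B)) < card (sep A (opp B))"
      by (rule psubset_card_mono[OF finite_sep[OF A] A'(4)])
    have supp_A'B: "supp A' = supp B" and N_A': "N \<subseteq> supp A'"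
      using A'(2) supp_AB N by simp_all
    have "\<exists>Z\<in>directions. (\<forall>f. f \<notin> sep A' (opp B) \<longrightarrow> Z f = A' f) \<and> (\<forall>f\<in>N. Z f = Zer)"
      by (rule less.hyps[OF lt A'(1) B supp_A'B N_A']) (rule agree')
    then obtain Z where Z: "Z \<in> directions" "\<And>f. f \<notin> sep A' (opp B) \<Longrightarrow> Z f = A' f"
      "\<And>f. f \<in> N \<Longrightarrow> Z f = Zer"
      by blast
    have "Z f = A f" if "f \<notin> sep A (opp B)" for f
    proof -
      have "f \<notin> sep A' (opp B)"
        using A'(4) that by blast
      then show ?thesis
        using Z(2) A'(3)[OF that] by simp
    qed
    with Z(1,3) show ?thesis
      by blast
  next
    case (red_B k Y)
    define B' where "B' = comp Y (opp B)"
    note B' = sep_reduction[OF B red_B(2,3,1), folded B'_def]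
    have sep_B': "sep A (opp B') \<subset> sep A (opp B)"
      using B'(4) by (simp add: sep_opp_comm[of A])
    then have lt: "card (sep A (opp B')) < card (sep A (opp B))"
      by (rule psubset_card_mono[OF finite_sep[OF A]])
    have supp_AB': "supp A = supp B'"
      using B'(2) supp_AB by simp
    have "\<exists>Z\<in>directions. (\<forall>f. f \<notin> sep A (opp B') \<longrightarrow> Z f = A f) \<and> (\<forall>f\<in>N. Z f = Zer)"
      by (rule less.hyps[OF lt A B'(1) supp_AB' N]) (rule agree)
    with sep_B' show ?thesis
      by blast
  next
    case base
    show ?thesis
      by (rule direction_vanishing_on_P_set[OF base(1,2) supp_AB base(3,4) N]) (rule agree)
  qed
qed

lemma direction_agreeing:
  assumes "A \<in> W" "B \<in> W" "supp A = supp B"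
  obtains Z where "Z \<in> directions" "\<And>f. f \<notin> sep A (opp B) \<Longrightarrow> Z f = A f"
  using direction_vanishing_on[OF assms, of "{}"] by auto

text \<open>Composing with a direction that disagrees with \<open>A\<close> at \<open>k\<close> produces a second vector of \<open>W\<close>
  on the support of \<open>A\<close>; eliminating \<open>k\<close> between the two stays within \<open>W\<close>.\<close>
lemma W_elim_by_direction:
  assumes A: "A \<in> W" and V: "V \<in> directions" and "S \<subseteq> supp A"
    and V_off: "\<And>f. f \<notin> S \<Longrightarrow> V f = A f"
    and k: "A k \<noteq> Zer" "V k = neg_sign (A k)"
  obtains T where "T \<in> W" "T k = Zer" "\<And>f. f \<notin> S \<Longrightarrow> T f = A f"
proof -
  define C where "C = comp V A"
  have "supp V \<subseteq> supp A"
  proof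
    fix f
    assume "f \<in> supp V"
    then show "f \<in> supp A"
      using V_off[of f] \<open>S \<subseteq> supp A\<close> by (cases "f \<in> S") auto
  qed
  have "C \<in> W"
    unfolding C_def by (rule directions_comp_W[OF V A])
  moreover have "supp A = supp C"
    unfolding C_def using supp_comp_eq[OF \<open>supp V \<subseteq> supp A\<close>] by simp
  moreover have "k \<in> sep A C"
    using k by (cases "A k") (auto simp: C_def)
  ultimately obtain T where T: "T \<in> W" "T k = Zer" "\<And>f. f \<notin> sep A C \<Longrightarrow> T f = A f"
    using A by (auto elim: W_elim)
  have "T f = A f" if "f \<notin> S" for f
    using T(3)[of f] V_off[OF that] by (cases "A f") (auto simp: C_def)
  with T(1,2) that show thesis
    by blast
qed

lemma eliminant_agreeing:
  assumes A: "A \<in> W" and B: "B \<in> W" and supp_AB: "supp A = supp B"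
    and k: "k \<in> sep A (opp B)"
  obtains Z where "Z \<in> W \<or> opp Z \<in> W \<or> Z \<in> directions" "Z k = Zer"
    "\<And>f. f \<notin> sep A (opp B) \<Longrightarrow> Z f = A f"
proof -
  obtain V where V: "V \<in> directions" "\<And>f. f \<notin> sep A (opp B) \<Longrightarrow> V f = A f"
    using direction_agreeing[OF A B supp_AB] by blast
  have "A k = B k" "A k \<noteq> Zer"
    using k by auto
  then consider "V k = Zer" | "V k = neg_sign (A k)" | "opp V k = neg_sign (B k)"
    by (cases "V k"; cases "A k") auto
  then show thesis
  proof cases
    case 1
    with V that show thesis
      by blast
  next
    case 2
    have "sep A (opp B) \<subseteq> supp A"
      by auto
    then obtain T where "T \<in> W" "T k = Zer" "\<And>f. f \<notin> sep A (opp B) \<Longrightarrow> T f = A f"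
      using W_elim_by_direction[OF A V(1) _ V(2) \<open>A k \<noteq> Zer\<close> 2] by blast
    with that show thesis
      by blast
  next
    case 3
    have "opp V f = B f" if "f \<notin> sep B (opp A)" for f
    proof -
      have f: "f \<notin> sep A (opp B)"
        using that by (simp add: sep_opp_comm[of B])
      then have "V f = neg_sign (B f)"
        using V(2) opp_eq_if_not_sep[OF supp_AB] by fastforce
      then show ?thesis
        by simp
    qed
    moreover have "B k \<noteq> Zer" "sep B (opp A) \<subseteq> supp B"
      using \<open>A k = B k\<close> \<open>A k \<noteq> Zer\<close> by auto
    ultimately obtain T where T: "T \<in> W" "T k = Zer" "\<And>f. f \<notin> sep B (opp A) \<Longrightarrow> T f = B f"
      using W_elim_by_direction[OF B directions_opp[OF V(1)] _ _ _ 3] by blast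
    have "opp T f = A f" if "f \<notin> sep A (opp B)" for f
    proof -
      have "T f = B f"
        using that T(3) by (simp add: sep_opp_comm[of A])
      then show ?thesis
        using opp_eq_if_not_sep[OF supp_AB that] by simp
    qed
    with T(1,2) that[of "opp T"] show thesis
      by simp
  qed
qed

text \<open>Otherwise \<open>Y\<close>, or the result of eliminating \<open>f\<close> between \<open>X \<circ> Y\<close> and \<open>Y \<circ> X\<close>,
  sticks out of \<open>\<sigma>\<close> less than \<open>X\<close>.\<close>
lemma minimal_agrees:
  assumes X: "X \<in> W" and min: "\<And>Y. Y \<in> W \<Longrightarrow> card (supp X - \<sigma>) \<le> card (supp Y - \<sigma>)"
    and Y: "Y \<in> W" "supp Y \<subseteq> \<sigma> \<union> supp X" and f: "f \<in> supp X - \<sigma>"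
  shows "Y f = X f"
proof (rule ccontr)
  assume ne: "Y f \<noteq> X f"
  have fin: "finite (supp X - \<sigma>)"
    using finite_supp[OF X] by simp
  have small: False if "Z \<in> W" "supp Z \<subseteq> \<sigma> \<union> supp X" "Z f = Zer" for Z
  proof -
    have "supp Z - \<sigma> \<subseteq> (supp X - \<sigma>) - {f}"
      using that(2,3) by auto
    then have "card (supp Z - \<sigma>) < card (supp X - \<sigma>)"
      using fin f by (meson card_Diff1_less card_mono finite_Diff le_less_trans)
    with min[OF that(1)] show False
      by simp
  qed
  show False
  proof (cases "Y f = Zer")
    case True
    with Y small show False
      by blast
  next
    case False
    have "comp X Y \<in> W" "comp Y X \<in> W" "supp (comp X Y) = supp (comp Y X)"
      using X Y by (auto simp: W_comp)
    moreover have "f \<in> sep (comp X Y) (comp Y X)"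
      using ne False f by (cases "X f"; cases "Y f") auto
    ultimately obtain R where "R \<in> W" "R f = Zer" "supp R \<subseteq> supp (comp X Y)"
      by (rule W_elim) blast
    moreover have "supp (comp X Y) \<subseteq> \<sigma> \<union> supp X"
      using Y(2) by auto
    ultimately show False
      using small by blast
  qed
qed

text \<open>\<open>A, B\<close> are \<open>T \<circ> T', T' \<circ> T\<close>, where \<open>T, T'\<close> eliminate \<open>e\<close> between \<open>V \<circ> X\<close> and
  \<open>U \<circ> X\<close>, and between \<open>-V \<circ> X\<close> and \<open>-U \<circ> X\<close>.\<close>
lemma directions_elim_pair:
  assumes V: "V \<in> directions" and U: "U \<in> directions" and supp_VU: "supp V = supp U"
    and e: "e \<in> sep V U" and X: "X \<in> W"
  obtains A B where "A \<in> W" "B \<in> W" "supp A = supp B" "A e = Zer" "supp A \<subseteq> supp V \<union> supp X"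
    "\<And>f. f \<notin> sep V U \<Longrightarrow> V f \<noteq> Zer \<Longrightarrow> A f = V f \<and> B f = neg_sign (V f)"
    "\<And>f. f \<notin> sep V U \<Longrightarrow> V f = Zer \<Longrightarrow> A f = X f"
proof -
  have through: "\<exists>T\<in>W. T e = Zer \<and> supp T \<subseteq> supp V' \<union> supp X \<and>
      (\<forall>f. f \<notin> sep V U \<longrightarrow> T f = comp V' X f)"
    if "V' \<in> directions" "U' \<in> directions" "supp V' = supp U'" "e \<in> sep V' U'"
      "sep V' U' = sep V U" for V' U'
  proof -
    have "comp V' X \<in> W" "comp U' X \<in> W" "supp (comp V' X) = supp (comp U' X)"
      using that X supp_eqD[OF that(3)] by (auto simp: directions_comp_W)
    moreover have "e \<in> sep (comp V' X) (comp U' X)"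
      using that(4) by auto
    ultimately obtain T where T: "T \<in> W" "T e = Zer" "supp T \<subseteq> supp (comp V' X)"
      "\<And>f. f \<notin> sep (comp V' X) (comp U' X) \<Longrightarrow> T f = comp V' X f"
      by (rule W_elim) blast
    have "\<forall>f. f \<notin> sep V U \<longrightarrow> T f = comp V' X f"
    proof (intro allI impI)
      fix f
      assume "f \<notin> sep V U"
      then show "T f = comp V' X f"
        using T(4)[of f] supp_eqD[OF \<open>supp V' = supp U'\<close>, of f] \<open>sep V' U' = sep V U\<close>
        by (cases "V' f"; cases "U' f"; cases "X f") auto
    qed
    moreover have "supp T \<subseteq> supp V' \<union> supp X"
      using T(3) by (simp add: supp_comp)
    ultimately show ?thesis
      using T(1,2) by blast
  qed
  obtain T T' where T: "T \<in> W" "T e = Zer" "supp T \<subseteq> supp V \<union> supp X"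
      "\<And>f. f \<notin> sep V U \<Longrightarrow> T f = comp V X f"
    and T': "T' \<in> W" "T' e = Zer" "supp T' \<subseteq> supp V \<union> supp X"
      "\<And>f. f \<notin> sep V U \<Longrightarrow> T' f = comp (opp V) X f"
    using through[OF V U supp_VU e] through[OF directions_opp[OF V] directions_opp[OF U]]
      supp_VU e by (auto simp: sep_opp_swap)
  show thesis
  proof (rule that[of "comp T T'" "comp T' T"])
    show "comp T T' \<in> W" "comp T' T \<in> W"
      using T(1) T'(1) by (simp_all add: W_comp)
    show "supp (comp T T') \<subseteq> supp V \<union> supp X"
      using T(3) T'(3) by (simp add: supp_comp)
    show "comp T T' f = V f \<and> comp T' T f = neg_sign (V f)" if "f \<notin> sep V U" "V f \<noteq> Zer" for f
      using that T(4) T'(4) by simp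
    show "comp T T' f = X f" if "f \<notin> sep V U" "V f = Zer" for f
      using that T(4) T'(4) by simp
  qed (use T(2) T'(2) in auto)
qed

lemma direction_vanishing_outside:
  assumes X: "X \<in> W" and X_min: "\<And>Y. Y \<in> W \<Longrightarrow> card (supp X - \<sigma>) \<le> card (supp Y - \<sigma>)"
    and A: "A \<in> W" "B \<in> W" "supp A = supp B" "supp A \<subseteq> \<sigma> \<union> supp X"
    and A_X: "\<And>f. f \<in> supp X - \<sigma> \<Longrightarrow> A f = X f"
  obtains Z where "Z \<in> directions" "\<And>f. f \<notin> sep A (opp B) \<Longrightarrow> Z f = A f"
    "\<And>f. f \<in> supp X - \<sigma> \<Longrightarrow> Z f = Zer"
proof -
  have N_A: "supp X - \<sigma> \<subseteq> supp A"
    using A_X by auto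
  have agree: "Y f = A f" if Y: "Y \<in> W" "supp Y \<subseteq> supp A" and f: "f \<in> supp X - \<sigma>" for Y f
  proof -
    have "supp Y \<subseteq> \<sigma> \<union> supp X"
      using Y(2) A(4) by blast
    then show ?thesis
      using minimal_agrees[OF X X_min Y(1) _ f] A_X[OF f] by simp
  qed
  have "\<exists>Z\<in>directions. (\<forall>f. f \<notin> sep A (opp B) \<longrightarrow> Z f = A f) \<and> (\<forall>f\<in>supp X - \<sigma>. Z f = Zer)"
    by (rule direction_vanishing_on[OF A(1-3) N_A]) (rule agree)
  with that show thesis
    by blast
qed

lemma directions_elim:
  assumes V: "V \<in> directions" and U: "U \<in> directions" and supp_VU: "supp V = supp U"
    and e: "e \<in> sep V U"
  obtains Z where "Z \<in> directions" "Z e = Zer" "\<And>f. f \<notin> sep V U \<Longrightarrow> Z f = V f"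
proof (cases "W = {}")
  case True
  text \<open>Then every sign vector on \<open>E\<close> is a direction, in particular \<open>V + U\<close>.\<close>
  have "sv_sum V U \<in> directions"
    unfolding directions_def using directions_signvecs[OF V] directions_signvecs[OF U] True
    by (auto simp: signvecs_iff sv_sum_apply)
  moreover have "sv_sum V U f = V f" if "f \<notin> sep V U" for f
    using that supp_eqD[OF supp_VU, of f] by (cases "V f"; cases "U f") (auto simp: sv_sum_apply)
  ultimately show thesis
    using e by (intro that[of "sv_sum V U"]) (auto simp: sv_sum_apply)
next
  case False
  obtain X where X: "X \<in> W" and min: "\<And>Y. Y \<in> W \<Longrightarrow> card (supp X - supp V) \<le> card (supp Y - supp V)"
    using ex_has_least_nat[of "\<lambda>X. X \<in> W" _ "\<lambda>X. card (supp X - supp V)"] False by blast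
  obtain A B where A: "A \<in> W" "B \<in> W" "supp A = supp B" "A e = Zer" "supp A \<subseteq> supp V \<union> supp X"
    and A_V: "\<And>f. f \<notin> sep V U \<Longrightarrow> V f \<noteq> Zer \<Longrightarrow> A f = V f \<and> B f = neg_sign (V f)"
    and A_X: "\<And>f. f \<notin> sep V U \<Longrightarrow> V f = Zer \<Longrightarrow> A f = X f"
    using directions_elim_pair[OF V U supp_VU e X] by blast
  have "A f = X f" if "f \<in> supp X - supp V" for f
    using that A_X supp_eqD[OF supp_VU, of f] by auto
  then obtain Z where Z: "Z \<in> directions" "\<And>f. f \<notin> sep A (opp B) \<Longrightarrow> Z f = A f"
      "\<And>f. f \<in> supp X - supp V \<Longrightarrow> Z f = Zer"
    using direction_vanishing_outside[OF X min A(1-3,5)] by blast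
  have "Z e = Zer"
    using Z(2)[of e] A(4) by simp
  moreover have "Z f = V f" if f: "f \<notin> sep V U" for f
  proof (cases "V f = Zer")
    case True
    then show ?thesis
      using Z(2,3)[of f] A_X[OF f] by (cases "f \<in> supp X") auto
  next
    case False
    then show ?thesis
      using Z(2)[of f] A_V[OF f] by (cases "V f") auto
  qed
  ultimately show thesis
    by (rule that[OF Z(1)])
qed

definition homogenization :: "'a option sv set" where
  "homogenization = {Y. (Y None = Pos \<and> restr Y \<in> W) \<or> (Y None = Neg \<and> opp (restr Y) \<in> W)
      \<or> (Y None = Zer \<and> restr Y \<in> directions)}"

lemma lift_mem_homogenization_iff:
  "lift X s \<in> homogenization \<longleftrightarrow>
    (s = Pos \<and> X \<in> W) \<or> (s = Neg \<and> opp X \<in> W) \<or> (s = Zer \<and> X \<in> directions)"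
  by (simp add: homogenization_def)

lemma mem_homogenization_iff: "Y \<in> homogenization \<longleftrightarrow> lift (restr Y) (Y None) \<in> homogenization"
  by (simp add: lift_restr)

lemma homogenization_signvecs:
  assumes "Y \<in> homogenization"
  shows "Y \<in> signvecs (insert None (Some ` E))"
proof -
  have "restr Y \<in> signvecs E"
    using assms W_signvecs directions_signvecs opp_signvecs[of "opp (restr Y)"]
    by (auto simp: homogenization_def)
  then show ?thesis
    by (simp add: restr_signvecs_iff)
qed

lemma homogenization_opp: "Y \<in> homogenization \<Longrightarrow> opp Y \<in> homogenization"
  by (cases "Y None") (auto simp: homogenization_def directions_opp)

lemma zero_homogenization: "(\<lambda>_. Zer) \<in> homogenization"
proof -
  have "(\<lambda>_. Zer) = lift (\<lambda>_. Zer) Zer"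
    by (rule ext) (simp add: lift_def split: option.split)
  then show ?thesis
    using zero_directions lift_mem_homogenization_iff by metis
qed

lemma homogenization_comp:
  assumes Y: "Y \<in> homogenization" and Y': "Y' \<in> homogenization"
  shows "comp Y Y' \<in> homogenization"
proof -
  define X X' s t where "X = restr Y" "X' = restr Y'" "s = Y None" "t = Y' None"
  have "lift X s \<in> homogenization" "lift X' t \<in> homogenization"
    using Y Y' by (simp_all add: X_X'_s_t_def flip: mem_homogenization_iff)
  then have "lift (comp X X') (if s = Zer then t else s) \<in> homogenization"
    using W_comp_opp[of X "opp X'"] W_comp_opp[of "opp X" X']
    by (cases s; cases t)
      (auto simp: lift_mem_homogenization_iff opp_comp W_comp W_comp_directions
        directions_comp_W directions_comp directions_opp)
  moreover have "comp Y Y' = comp (lift X s) (lift X' t)"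
    by (simp add: X_X'_s_t_def lift_restr)
  ultimately show ?thesis
    by (simp add: comp_lift)
qed

lemma homogenization_elim_same_level:
  assumes "lift X s \<in> homogenization" "lift Y s \<in> homogenization" and supp_XY: "supp X = supp Y"
    and k: "k \<in> sep X Y"
  obtains T where "lift T s \<in> homogenization" "T k = Zer" "\<And>j. j \<notin> sep X Y \<Longrightarrow> T j = X j"
proof (cases s)
  case Pos
  with assms obtain T where "T \<in> W" "T k = Zer" "\<And>j. j \<notin> sep X Y \<Longrightarrow> T j = X j"
    by (auto simp: lift_mem_homogenization_iff elim: W_elim)
  with Pos that show thesis
    by (simp add: lift_mem_homogenization_iff)
next
  case Neg
  with assms have "opp X \<in> W" "opp Y \<in> W" "supp (opp X) = supp (opp Y)" "k \<in> sep (opp X) (opp Y)"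
    by (auto simp: lift_mem_homogenization_iff)
  then obtain T where "T \<in> W" "T k = Zer" "\<And>j. j \<notin> sep (opp X) (opp Y) \<Longrightarrow> T j = opp X j"
    by (rule W_elim) blast
  with Neg show thesis
    by (intro that[of "opp T"]) (auto simp: lift_mem_homogenization_iff)
next
  case Zer
  with assms obtain T where "T \<in> directions" "T k = Zer" "\<And>j. j \<notin> sep X Y \<Longrightarrow> T j = X j"
    by (auto simp: lift_mem_homogenization_iff elim: directions_elim)
  with Zer that show thesis
    by (simp add: lift_mem_homogenization_iff)
qed

lemma homogenization_elim_opposite_levels:
  assumes X: "X \<in> W" and Y: "opp Y \<in> W" and supp_XY: "supp X = supp Y"
    and e: "e \<in> sep (lift X Pos) (lift Y Neg)"
  obtains Z where "Z \<in> homogenization" "Z e = Zer"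
    "\<And>f. f \<notin> sep (lift X Pos) (lift Y Neg) \<Longrightarrow> Z f = lift X Pos f"
proof (cases e)
  case None
  obtain V where "V \<in> directions" "\<And>j. j \<notin> sep X Y \<Longrightarrow> V j = X j"
    using direction_agreeing[OF X Y] supp_XY by auto
  then show thesis
    using None by (intro that[of "lift V Zer"] lift_eq_off_sep)
      (auto simp: lift_mem_homogenization_iff)
next
  case (Some k)
  obtain T where "T \<in> W \<or> opp T \<in> W \<or> T \<in> directions" "T k = Zer"
    "\<And>j. j \<notin> sep X Y \<Longrightarrow> T j = X j"
    using eliminant_agreeing[OF X Y] supp_XY e Some by auto
  then obtain s where "lift T s \<in> homogenization" "T k = Zer" "\<And>j. j \<notin> sep X Y \<Longrightarrow> T j = X j"
    by (auto simp: lift_mem_homogenization_iff)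
  then show thesis
    using Some by (intro that[of "lift T s"] lift_eq_off_sep) auto
qed

lemma homogenization_elim_ordered:
  assumes Y1: "Y1 \<in> homogenization" and Y2: "Y2 \<in> homogenization"
    and supp_Y: "supp Y1 = supp Y2" and e: "e \<in> sep Y1 Y2"
    and ordered: "\<not> (Y1 None = Neg \<and> Y2 None = Pos)"
  shows "\<exists>Z\<in>homogenization. Z e = Zer \<and> (\<forall>f. f \<notin> sep Y1 Y2 \<longrightarrow> Z f = Y1 f)"
proof -
  define X1 X2 s t where "X1 = restr Y1" "X2 = restr Y2" "s = Y1 None" "t = Y2 None"
  have Y_eq: "Y1 = lift X1 s" "Y2 = lift X2 t"
    by (simp_all add: X1_X2_s_t_def lift_restr)
  have H: "lift X1 s \<in> homogenization" "lift X2 t \<in> homogenization"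
    using Y1 Y2 Y_eq by simp_all
  have supp_X: "supp X1 = supp X2" and st: "s = Zer \<longleftrightarrow> t = Zer"
    using supp_eqD[OF supp_Y] by (auto simp: X1_X2_s_t_def)
  consider "s = t" | "s = Pos" "t = Neg"
    using st ordered by (cases s; cases t) (auto simp: X1_X2_s_t_def)
  then show ?thesis
  proof cases
    case 1
    then obtain k where k: "e = Some k" "k \<in> sep X1 X2"
      using e by (cases e) (auto simp: Y_eq)
    obtain T where "lift T s \<in> homogenization" "T k = Zer" "\<And>j. j \<notin> sep X1 X2 \<Longrightarrow> T j = X1 j"
      using homogenization_elim_same_level[OF H(1) H(2)[folded 1] supp_X k(2)] by blast
    then show ?thesis
      using k 1 unfolding Y_eq by (intro bexI[of _ "lift T s"] conjI allI impI lift_eq_off_sep) auto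
  next
    case 2
    have "X1 \<in> W" "opp X2 \<in> W"
      using H 2 by (simp_all add: lift_mem_homogenization_iff)
    moreover have "e \<in> sep (lift X1 Pos) (lift X2 Neg)"
      using e 2 Y_eq by simp
    ultimately obtain Z where "Z \<in> homogenization" "Z e = Zer"
      "\<And>f. f \<notin> sep (lift X1 Pos) (lift X2 Neg) \<Longrightarrow> Z f = lift X1 Pos f"
      using homogenization_elim_opposite_levels[OF _ _ supp_X] by blast
    then show ?thesis
      unfolding Y_eq 2 by blast
  qed
qed

lemma homogenization_elim:
  assumes Y1: "Y1 \<in> homogenization" and Y2: "Y2 \<in> homogenization"
    and supp_Y: "supp Y1 = supp Y2" and e: "e \<in> sep Y1 Y2"
  shows "\<exists>Z\<in>homogenization. Z e = Zer \<and> (\<forall>f. f \<notin> sep Y1 Y2 \<longrightarrow> Z f = Y1 f)"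
proof (cases "Y1 None = Neg \<and> Y2 None = Pos")
  case False
  then show ?thesis
    using homogenization_elim_ordered[OF assms] by blast
next
  case True
  then obtain Z where Z: "Z \<in> homogenization" "Z e = Zer" "\<And>f. f \<notin> sep Y2 Y1 \<Longrightarrow> Z f = Y2 f"
    using homogenization_elim_ordered[OF Y2 Y1 supp_Y[symmetric]] e by (auto simp: sep_sym[of Y2])
  have "Z f = Y1 f" if "f \<notin> sep Y1 Y2" for f
    using Z(3)[of f] eq_if_not_sep[OF supp_Y that] that by (simp add: sep_sym[of Y2])
  with Z(1,2) show ?thesis
    by blast
qed

lemma oriented_matroid_homogenization: "oriented_matroid (insert None (Some ` E)) homogenization"
  unfolding oriented_matroid_def
proof (intro conjI ballI impI subsetI)
  fix X Y e
  assume "X \<in> homogenization" "Y \<in> homogenization" and supp_XY: "supp X = supp Y"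
    and "e \<in> sep X Y"
  then obtain Z where "Z \<in> homogenization" "Z e = Zer" "\<And>f. f \<notin> sep X Y \<Longrightarrow> Z f = X f"
    using homogenization_elim by blast
  moreover have "comp X Y f = X f" "comp Y X f = X f" if "f \<notin> sep X Y" for f
    using eq_if_not_sep[OF supp_XY that] by simp_all
  ultimately show "\<exists>Z\<in>homogenization. Z e = Zer \<and>
      (\<forall>f. f \<notin> sep X Y \<longrightarrow> Z f = comp X Y f \<and> Z f = comp Y X f)"
    by metis
qed (simp_all add: homogenization_signvecs zero_homogenization homogenization_opp
  homogenization_comp)

lemma affine_oriented_matroid: "affine_oriented_matroid E W"
  unfolding affine_oriented_matroid_def
proof (intro exI conjI)
  show "W = {\<lambda>e. X (Some e) | X. X \<in> homogenization \<and> X None = Pos}"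
  proof (intro equalityI subsetI)
    fix X
    assume "X \<in> W"
    then show "X \<in> {\<lambda>e. X (Some e) | X. X \<in> homogenization \<and> X None = Pos}"
      by (intro CollectI exI[of _ "lift X Pos"]) (simp add: lift_mem_homogenization_iff)
  qed (auto simp: homogenization_def restr_def)
qed (rule oriented_matroid_homogenization)

end

lemma axioms_imp_affine_oriented_matroid:
  assumes "finite E" "W \<subseteq> signvecs E" "A1 W" "A2 E W" "A3 E W"
  shows "affine_oriented_matroid E W"
proof -
  interpret affine_axioms E W
    using assms by unfold_locales
  show ?thesis
    by (rule affine_oriented_matroid)
qed

theorem theorem2p1:
  fixes E :: "'a set" and W :: "('a \<Rightarrow> sign) set"
  assumes "finite E" and "W \<subseteq> signvecs E"
  shows "affine_oriented_matroid E W \<longleftrightarrow> (A1 W \<and> A2 E W \<and> A3 E W)"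
proof
  assume "affine_oriented_matroid E W"
  then show "A1 W \<and> A2 E W \<and> A3 E W"
    by (rule affine_oriented_matroid_imp_axioms)
next
  assume "A1 W \<and> A2 E W \<and> A3 E W"
  then show "affine_oriented_matroid E W"
    using axioms_imp_affine_oriented_matroid[OF assms] by blast
qed

end
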